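(* Let $G$ be a finite graph and let $\mathcal{B}$ be a set of closed neighborhoods in $G$. Suppose $G$ has four pairwise false twins $u_1,u_2,u_3,u_4$ (i.e. $N(u_i)=N(u_j)$ for all $i,j$) with $N[u_1],\ldots,N[u_4]\in\mathcal{B}$. Then for any non-clashing teaching map $T$ of size $1$ for $\mathcal{B}$, there exists $i\in\{1,2,3,4\}$ such that $T(N[u_i])=\{u_i\}$.
   Context: For a vertex $v$, $N(v)$ is its open neighborhood and $N[v]=N(v)\cup\{v\}$ its closed neighborhood. A teaching map for a set $\mathcal{B}$ of closed neighborhoods assigns to each $B\in\mathcal{B}$ a set $T(B)\subseteq V(G)$ (the examples, each labeled by membership in $B$). A vertex $w$ distinguishes $B,B'$ if $w\in (B\cup B')\setminus(B\cap B')$. $T$ is non-clashing if for all distinct $B,B'\in\mathcal{B}$ some $w\in T(B)\cup T(B')$ distinguishes $B$ and $B'$. The size of $T$ is $\max_{B\in\mathcal{B}}|T(B)|$. *)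

theory Defs
  imports Main
begin

definition graph :: "'a set \<Rightarrow> ('a \<Rightarrow> 'a \<Rightarrow> bool) \<Rightarrow> bool" where
  "graph V E \<longleftrightarrow> finite V \<and> (\<forall>x y. E x y \<longrightarrow> x \<in> V \<and> y \<in> V)
     \<and> (\<forall>x y. E x y \<longrightarrow> E y x) \<and> (\<forall>x. \<not> E x x)"

definition open_nbh :: "'a set \<Rightarrow> ('a \<Rightarrow> 'a \<Rightarrow> bool) \<Rightarrow> 'a \<Rightarrow> 'a set" where
  "open_nbh V E v = {w \<in> V. E v w}"

definition closed_nbh :: "'a set \<Rightarrow> ('a \<Rightarrow> 'a \<Rightarrow> bool) \<Rightarrow> 'a \<Rightarrow> 'a set" where
  "closed_nbh V E v = insert v (open_nbh V E v)"

definition distinguishes :: "'a \<Rightarrow> 'a set \<Rightarrow> 'a set \<Rightarrow> bool" where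
  "distinguishes w B B' \<longleftrightarrow> w \<in> (B \<union> B') - (B \<inter> B')"

definition teaching_map :: "'a set \<Rightarrow> 'a set set \<Rightarrow> ('a set \<Rightarrow> 'a set) \<Rightarrow> bool" where
  "teaching_map V \<B> T \<longleftrightarrow> (\<forall>B\<in>\<B>. T B \<subseteq> V)"

definition non_clashing :: "'a set set \<Rightarrow> ('a set \<Rightarrow> 'a set) \<Rightarrow> bool" where
  "non_clashing \<B> T \<longleftrightarrow> (\<forall>B\<in>\<B>. \<forall>B'\<in>\<B>. B \<noteq> B' \<longrightarrow>
      (\<exists>w \<in> T B \<union> T B'. distinguishes w B B'))"

definition tm_size :: "'a set set \<Rightarrow> ('a set \<Rightarrow> 'a set) \<Rightarrow> nat" where
  "tm_size \<B> T = Max ((\<lambda>B. card (T B)) ` \<B>)"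

end

theory Submission
  imports Defs
begin

text \<open>The closed neighbourhoods of two distinct false twins x, y differ exactly in x and y,
  so a non-clashing map must use x or y as an example for one of them. If no twin u is taught
  by its own singleton T(N[u]) = {u}, then the single example of each twin's neighbourhood can
  only help if it is another twin, and then it settles one pair of twins; but four twins form
  six pairs.\<close>

lemma card_le_3_if_total_on_single_valued:
  assumes "finite A" and "total_on A r" and "single_valued r"
  shows "card A \<le> 3"
proof -
  define arcs where "arcs = {(x, y) \<in> r. x \<in> A \<and> y \<in> A \<and> x \<noteq> y}"
  define pairs where "pairs = {p. p \<subseteq> A \<and> card p = 2}"
  have finite_arcs: "finite arcs"
    using finite_subset[of arcs "A \<times> A"] assms(1) by (auto simp: arcs_def)
  have "pairs \<subseteq> (\<lambda>(x, y). {x, y}) ` arcs"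
  proof
    fix p assume "p \<in> pairs"
    then obtain x y where "p = {x, y}" "x \<noteq> y" "x \<in> A" "y \<in> A"
      by (auto simp: pairs_def card_2_iff)
    with assms(2) consider "(x, y) \<in> arcs" | "(y, x) \<in> arcs"
      unfolding total_on_def arcs_def by blast
    then show "p \<in> (\<lambda>(x, y). {x, y}) ` arcs"
      using \<open>p = {x, y}\<close> by cases (force simp: insert_commute)+
  qed
  with finite_arcs have "card pairs \<le> card arcs"
    by (rule surj_card_le)
  also have "card arcs \<le> card A"
  proof (rule card_inj_on_le)
    show "inj_on fst arcs"
      using assms(3) by (auto simp: inj_on_def arcs_def single_valued_def)
  qed (use assms(1) in \<open>auto simp: arcs_def\<close>)
  finally have pairs_le: "card A choose 2 \<le> card A"
    using n_subsets[OF assms(1), of 2] by (simp add: pairs_def)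
  show ?thesis
  proof (rule ccontr)
    assume "\<not> card A \<le> 3"
    with pairs_le have "3 * card A \<le> card A * (card A - 1)" "card A * (card A - 1) div 2 \<le> card A"
      by (simp_all add: choose_two)
    with \<open>\<not> card A \<le> 3\<close> show False by linarith
  qed
qed

lemma not_in_open_nbh: "graph V E \<Longrightarrow> v \<notin> open_nbh V E v"
  by (simp add: graph_def open_nbh_def)

lemma distinguishes_closed_nbh_false_twins:
  assumes "graph V E" and "open_nbh V E x = open_nbh V E y" and "x \<noteq> y"
  shows "distinguishes w (closed_nbh V E x) (closed_nbh V E y) \<longleftrightarrow> w \<in> {x, y}"
proof -
  have "x \<notin> open_nbh V E y" "y \<notin> open_nbh V E y"
    using not_in_open_nbh[OF assms(1)] assms(2) by metis+
  then show ?thesis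
    unfolding distinguishes_def closed_nbh_def assms(2) using assms(3) by blast
qed

lemma finite_closed_nbh_family:
  assumes "graph V E" and "\<forall>B\<in>\<B>. \<exists>v\<in>V. B = closed_nbh V E v"
  shows "finite \<B>"
proof (rule finite_subset)
  show "\<B> \<subseteq> closed_nbh V E ` V"
    using assms(2) by blast
  show "finite (closed_nbh V E ` V)"
    using assms(1) by (simp add: graph_def)
qed

lemma card_le_tm_size:
  assumes "finite \<B>" and "B \<in> \<B>"
  shows "card (T B) \<le> tm_size \<B> T"
  unfolding tm_size_def using assms by (intro Max_ge) simp_all

lemma eq_if_in_teaching_set_tm_size_le_1:
  assumes "teaching_map V \<B> T" and "finite V" and "finite \<B>" and "tm_size \<B> T \<le> 1"
    and "B \<in> \<B>" and "x \<in> T B" and "y \<in> T B"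
  shows "x = y"
proof -
  have "finite (T B)"
    using assms(1,2,5) finite_subset unfolding teaching_map_def by blast
  moreover have "card (T B) \<le> 1"
    using card_le_tm_size[OF assms(3,5), of T] assms(4) by simp
  ultimately show ?thesis
    using assms(6,7) card_le_Suc0_iff_eq by auto
qed

lemma ex_self_taught_false_twin:
  assumes "graph V E" and "non_clashing \<B> T"
    and single: "\<And>B x y. B \<in> \<B> \<Longrightarrow> x \<in> T B \<Longrightarrow> y \<in> T B \<Longrightarrow> x = y"
    and twins: "\<And>x y. x \<in> U \<Longrightarrow> y \<in> U \<Longrightarrow> open_nbh V E x = open_nbh V E y"
    and "\<And>x. x \<in> U \<Longrightarrow> closed_nbh V E x \<in> \<B>"
    and "3 < card U"
  shows "\<exists>x\<in>U. T (closed_nbh V E x) = {x}"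
proof (rule ccontr)
  assume no_self: "\<not> ?thesis"
  have not_self_example: "x \<notin> T (closed_nbh V E x)" if "x \<in> U" for x
    using no_self single[OF assms(5)[OF that]] that by blast
  define r where "r = {(x, y). x \<in> U \<and> y \<in> T (closed_nbh V E x)}"
  have "single_valued r"
    using single assms(5) by (auto simp: single_valued_def r_def)
  moreover have "total_on U r"
    unfolding total_on_def
  proof (intro ballI impI)
    fix x y assume "x \<in> U" "y \<in> U" "x \<noteq> y"
    have distinguishes_iff:
      "distinguishes w (closed_nbh V E x) (closed_nbh V E y) \<longleftrightarrow> w \<in> {x, y}" for w
      using distinguishes_closed_nbh_false_twins[OF assms(1) twins \<open>x \<noteq> y\<close>]
        \<open>x \<in> U\<close> \<open>y \<in> U\<close> .
    then have "closed_nbh V E x \<noteq> closed_nbh V E y"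
      by (auto simp: distinguishes_def)
    then obtain w where "w \<in> T (closed_nbh V E x) \<union> T (closed_nbh V E y)"
      and "distinguishes w (closed_nbh V E x) (closed_nbh V E y)"
      using assms(2,5) \<open>x \<in> U\<close> \<open>y \<in> U\<close> unfolding non_clashing_def by blast
    moreover from this(2) have "w = x \<or> w = y"
      using distinguishes_iff by simp
    ultimately have "y \<in> T (closed_nbh V E x) \<or> x \<in> T (closed_nbh V E y)"
      using not_self_example \<open>x \<in> U\<close> \<open>y \<in> U\<close> by blast
    then show "(x, y) \<in> r \<or> (y, x) \<in> r"
      using \<open>x \<in> U\<close> \<open>y \<in> U\<close> by (simp add: r_def)
  qed
  moreover have "finite U"
    using assms(6) card.infinite by fastforce
  ultimately have "card U \<le> 3"
    using card_le_3_if_total_on_single_valued by blast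
  with assms(6) show False by simp
qed

theorem lemma1:
  fixes V :: "'a set" and E :: "'a \<Rightarrow> 'a \<Rightarrow> bool" and \<B> :: "'a set set"
    and T :: "'a set \<Rightarrow> 'a set" and u :: "nat \<Rightarrow> 'a"
  assumes "graph V E"
    and "\<forall>B\<in>\<B>. \<exists>v\<in>V. B = closed_nbh V E v"
    and "\<forall>i\<in>{1..4}. u i \<in> V"
    and "inj_on u {1..4}"
    and "\<forall>i\<in>{1..4}. \<forall>j\<in>{1..4}. open_nbh V E (u i) = open_nbh V E (u j)"
    and "\<forall>i\<in>{1..4}. closed_nbh V E (u i) \<in> \<B>"
    and "teaching_map V \<B> T" and "non_clashing \<B> T" and "tm_size \<B> T = 1"
  shows "\<exists>i\<in>{1..4}. T (closed_nbh V E (u i)) = {u i}"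
proof -
  have "finite \<B>"
    using assms(1,2) by (rule finite_closed_nbh_family)
  have "finite V"
    using assms(1) by (simp add: graph_def)
  have "\<exists>x\<in>u ` {1..4}. T (closed_nbh V E x) = {x}"
  proof (rule ex_self_taught_false_twin[OF assms(1,8)])
    show "x = y" if "B \<in> \<B>" "x \<in> T B" "y \<in> T B" for B x y
      using eq_if_in_teaching_set_tm_size_le_1[OF assms(7) \<open>finite V\<close> \<open>finite \<B>\<close>] assms(9) that
      by simp
    show "open_nbh V E x = open_nbh V E y" if "x \<in> u ` {1..4}" "y \<in> u ` {1..4}" for x y
      using assms(5) that by blast
    show "closed_nbh V E x \<in> \<B>" if "x \<in> u ` {1..4}" for x
      using assms(6) that by blast
    show "3 < card (u ` {1..4})"
      using assms(4) by (simp add: card_image)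
  qed
  then show ?thesis
    by blast
qed

end
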